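(* Let $\rho\in(0,1)$ and $\sigma_x<\sigma_y$. For every $\mathbf a=(x_1,y_1)\in\mathbb R^2$ with $x_1^2+y_1^2>2x_2^{*2}$, $K(\mathbf a,\mathbf b^* )>0$.
   Context: Standing setup. Fix $\sigma_x,\sigma_y>0$ and $\rho\in(-1,1)$, and let $(\xi,\eta)$ be a bivariate normal random vector with mean $(0,0)$ and covariance matrix $\Sigma=\begin{pmatrix}\sigma_x^2&\rho\sigma_x\sigma_y\\ \rho\sigma_x\sigma_y&\sigma_y^2\end{pmatrix}$. Player I (the minimizer) chooses $\mathbf a=(x_1,y_1)\in\mathbb R^2$ and Player II (the maximizer) chooses $\mathbf b=(x_2,y_2)\in\mathbb R^2$. Let $C_1(\mathbf a,\mathbf b)=\{(x,y):(x_1-x)^2+(y_1-y)^2<(x_2-x)^2+(y_2-y)^2\}$ and $C_2(\mathbf a,\mathbf b)=\{(x,y):(x_1-x)^2+(y_1-y)^2>(x_2-x)^2+(y_2-y)^2\}$. The payoff to Player II (paid by Player I) is $K(\mathbf a,\mathbf b)=x_1+y_1$ if $\mathbf a=\mathbf b$, and $K(\mathbf a,\mathbf b)=(x_1+y_1)\,P((\xi,\eta)\in C_1(\mathbf a,\mathbf b))+(x_2+y_2)\,P((\xi,\eta)\in C_2(\mathbf a,\mathbf b))$ if $\mathbf a\neq\mathbf b$. For $\mathbf a=(x,y)$ write $-\mathbf a=(-x,-y)$. Let $x_2^*=\frac{\sqrt{2\pi(\sigma_x^2+2\rho\sigma_x\sigma_y+\sigma_y^2)}}{4}$, $\mathbf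 b^*=(x_2^*,x_2^* )$ and $\mathbf a^*=(-x_2^*,-x_2^* )$. *)

theory Defs
  imports "HOL-Probability.Probability"
begin

text \<open>Density of the centred bivariate normal distribution with standard deviations
  sx, sy and correlation r, i.e. covariance matrix
  [[sx^2, r sx sy], [r sx sy, sy^2]] (valid for sx, sy > 0 and -1 < r < 1).\<close>
definition bvn_density :: "real \<Rightarrow> real \<Rightarrow> real \<Rightarrow> real \<times> real \<Rightarrow> real" where
  "bvn_density sx sy r p =
     (let x = fst p; y = snd p in
      exp (- (x^2 / sx^2 - 2 * r * x * y / (sx * sy) + y^2 / sy^2) / (2 * (1 - r^2)))
      / (2 * pi * sx * sy * sqrt (1 - r^2)))"

definition bvn_measure :: "real \<Rightarrow> real \<Rightarrow> real \<Rightarrow> (real \<times> real) measure" where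
  "bvn_measure sx sy r = density lborel (\<lambda>p. ennreal (bvn_density sx sy r p))"

definition bvn_prob :: "real \<Rightarrow> real \<Rightarrow> real \<Rightarrow> (real \<times> real) set \<Rightarrow> real" where
  "bvn_prob sx sy r A = measure (bvn_measure sx sy r) A"

definition C1 :: "real \<times> real \<Rightarrow> real \<times> real \<Rightarrow> (real \<times> real) set" where
  "C1 a b = {(x, y). (fst a - x)^2 + (snd a - y)^2 < (fst b - x)^2 + (snd b - y)^2}"

definition C2 :: "real \<times> real \<Rightarrow> real \<times> real \<Rightarrow> (real \<times> real) set" where
  "C2 a b = {(x, y). (fst a - x)^2 + (snd a - y)^2 > (fst b - x)^2 + (snd b - y)^2}"

definition payoffK :: "real \<Rightarrow> real \<Rightarrow> real \<Rightarrow> real \<times> real \<Rightarrow> real \<times> real \<Rightarrow> real" where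
  "payoffK sx sy r a b =
     (if a = b then fst a + snd a
      else (fst a + snd a) * bvn_prob sx sy r (C1 a b)
         + (fst b + snd b) * bvn_prob sx sy r (C2 a b))"

definition x2star :: "real \<Rightarrow> real \<Rightarrow> real \<Rightarrow> real" where
  "x2star sx sy r = sqrt (2 * pi * (sx^2 + 2 * r * sx * sy + sy^2)) / 4"

end

theory Submission
  imports Defs
begin

text \<open>
  For \<open>a \<noteq> b\<close> the cells \<open>C1\<close> and \<open>C2\<close> are the open half-planes on either side of the
  perpendicular bisector of \<open>a\<close> and \<open>b\<close>, and every nonzero linear form \<open>w1 \<xi> + w2 \<eta>\<close> is a
  centred normal variable with variance \<open>w\<^sup>T \<Sigma> w\<close>. Hence
  \<open>K(a, b\<^sup>*) = (x1 + y1) q + 2 x2\<^sup>* (1 - q)\<close>, where \<open>q = Q(c / \<sigma>)\<close> for the standard normal tail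
  \<open>Q = normal_tail\<close>, \<open>c = (|a|\<^sup>2 - 2 x2\<^sup>*\<^sup>2) / 2 > 0\<close> and \<open>\<sigma>\<close> is the standard deviation of
  \<open>(a - b\<^sup>*) \<cdot> (\<xi>, \<eta>)\<close>. Since \<open>q < 1/2\<close>, the payoff is positive as soon as \<open>x1 + y1 \<ge> -2 x2\<^sup>*\<close>.

  Beyond that line put \<open>u = -(x1 + y1)\<close>. Both \<open>|x1 - x2\<^sup>*|\<close> and \<open>|y1 - x2\<^sup>*|\<close> are at most
  \<open>M = u/2 + x2\<^sup>* + |x1 - y1|/2\<close>, so \<open>\<sigma> \<le> M \<surd>(\<sigma>x\<^sup>2 + 2\<rho>\<sigma>x\<sigma>y + \<sigma>y\<^sup>2)\<close> (this needs \<open>\<rho> \<ge> 0\<close>),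
  while \<open>c \<ge> 2 E M\<close> for the margin \<open>E = \<surd>(u\<^sup>2/2 + u x2\<^sup>*) - u/2 - x2\<^sup>* > 0\<close>. By the choice of
  \<open>x2\<^sup>*\<close> this gives \<open>c / \<sigma> \<ge> e \<surd>(2\<pi>) / 2\<close> with \<open>e = E / x2\<^sup>*\<close>, and the claim reduces to the
  one-variable inequality \<open>Q(e \<surd>(2\<pi>) / 2) (2 + U) < 2\<close> for \<open>U = u / x2\<^sup>*\<close>, which is tied to
  \<open>e\<close> by \<open>U\<^sup>2 = 4 e U + 4 (e + 1)\<^sup>2\<close>. For \<open>e \<le> 11/10\<close> this follows from the Taylor bound
  \<open>Q(t) \<le> 1/2 - (t - t\<^sup>3/6) / \<surd>(2\<pi>)\<close>, beyond from the Chernoff bound \<open>Q(t) \<le> exp(-t\<^sup>2/2) / 2\<close>.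
\<close>

section \<open>Centred normal laws and the normal tail\<close>

definition normal_measure :: "real \<Rightarrow> real \<Rightarrow> real measure" where
  "normal_measure \<mu> \<sigma> = density lborel (\<lambda>x. ennreal (normal_density \<mu> \<sigma> x))"

lemma prob_space_normal_measure: "0 < \<sigma> \<Longrightarrow> prob_space (normal_measure \<mu> \<sigma>)"
  unfolding normal_measure_def by (rule prob_space_normal_density)

lemma sets_normal_measure [simp, measurable_cong]: "sets (normal_measure \<mu> \<sigma>) = sets borel"
  by (simp add: normal_measure_def)

lemma space_normal_measure [simp]: "space (normal_measure \<mu> \<sigma>) = UNIV"
  by (simp add: normal_measure_def)

lemma emeasure_normal_measure:
  "A \<in> sets borel \<Longrightarrow>
     emeasure (normal_measure \<mu> \<sigma>) A = (\<integral>\<^sup>+x\<in>A. normal_density \<mu> \<sigma> x \<partial>lborel)"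
  by (simp add: normal_measure_def emeasure_density)

lemma nn_integral_normal_density_eq_1: "0 < \<sigma> \<Longrightarrow> (\<integral>\<^sup>+x. normal_density \<mu> \<sigma> x \<partial>lborel) = 1"
  using prob_space.emeasure_space_1[OF prob_space_normal_measure]
  by (simp add: normal_measure_def emeasure_density)

lemma normal_density_affine_eq:
  assumes "a \<noteq> 0" "0 < \<sigma>"
  shows "\<bar>a\<bar> * normal_density (b + a * \<mu>) (\<bar>a\<bar> * \<sigma>) (b + a * y) = normal_density \<mu> \<sigma> y"
  using assms
  by (simp add: normal_density_def real_sqrt_mult field_simps) (simp add: power2_eq_square field_simps)

lemma nn_integral_normal_density_affine:
  fixes f :: "real \<Rightarrow> ennreal"
  assumes "a \<noteq> 0" "0 < \<sigma>" and [measurable]: "f \<in> borel_measurable borel"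
  shows "(\<integral>\<^sup>+y. normal_density \<mu> \<sigma> y * f (b + a * y) \<partial>lborel)
       = (\<integral>\<^sup>+l. normal_density (b + a * \<mu>) (\<bar>a\<bar> * \<sigma>) l * f l \<partial>lborel)"
proof -
  have "(\<integral>\<^sup>+l. normal_density (b + a * \<mu>) (\<bar>a\<bar> * \<sigma>) l * f l \<partial>lborel)
      = \<bar>a\<bar> * (\<integral>\<^sup>+y. normal_density (b + a * \<mu>) (\<bar>a\<bar> * \<sigma>) (b + a * y) * f (b + a * y) \<partial>lborel)"
    using assms(1) by (intro nn_integral_real_affine) auto
  also have "\<dots> = (\<integral>\<^sup>+y. normal_density \<mu> \<sigma> y * f (b + a * y) \<partial>lborel)"
    using assms(1,2)
    by (subst nn_integral_cmult[symmetric])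
       (auto simp: ennreal_mult'[symmetric] mult.assoc[symmetric] normal_density_affine_eq)
  finally show ?thesis ..
qed

lemma normal_measure_affine:
  assumes "a \<noteq> 0" "0 < \<sigma>"
  shows "distr (normal_measure \<mu> \<sigma>) lborel (\<lambda>y. b + a * y) = normal_measure (b + a * \<mu>) (\<bar>a\<bar> * \<sigma>)"
proof (rule measure_eqI)
  fix A assume "A \<in> sets (distr (normal_measure \<mu> \<sigma>) lborel (\<lambda>y. b + a * y))"
  then have [measurable]: "A \<in> sets borel" by simp
  have "emeasure (distr (normal_measure \<mu> \<sigma>) lborel (\<lambda>y. b + a * y)) A
      = emeasure (normal_measure \<mu> \<sigma>) {y. b + a * y \<in> A}"
    by (subst emeasure_distr) (auto simp: vimage_def)
  also have "\<dots> = (\<integral>\<^sup>+y. normal_density \<mu> \<sigma> y * (indicator A (b + a * y) :: ennreal) \<partial>lborel)"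
    by (subst emeasure_normal_measure) (auto intro!: nn_integral_cong simp: indicator_def)
  also have "\<dots> = emeasure (normal_measure (b + a * \<mu>) (\<bar>a\<bar> * \<sigma>)) A"
    using nn_integral_normal_density_affine[OF assms, where f="indicator A"]
    by (simp add: emeasure_normal_measure)
  finally show "emeasure (distr (normal_measure \<mu> \<sigma>) lborel (\<lambda>y. b + a * y)) A
      = emeasure (normal_measure (b + a * \<mu>) (\<bar>a\<bar> * \<sigma>)) A" .
qed simp

lemma nn_integral_normal_mixture:
  assumes "0 < \<sigma>" "0 < \<gamma>"
  shows "(\<integral>\<^sup>+x. normal_density 0 \<sigma> x * ennreal (normal_density (\<alpha> * x) \<gamma> l) \<partial>lborel)
       = normal_density 0 (sqrt (\<gamma>\<^sup>2 + (\<alpha> * \<sigma>)\<^sup>2)) l"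
proof (cases "\<alpha> = 0")
  case True
  then show ?thesis
    using assms by (simp add: nn_integral_multc nn_integral_normal_density_eq_1)
next
  case False
  have "(\<integral>\<^sup>+x. normal_density 0 \<sigma> x * ennreal (normal_density (\<alpha> * x) \<gamma> l) \<partial>lborel)
      = (\<integral>\<^sup>+x. normal_density 0 \<sigma> x * ennreal (normal_density 0 \<gamma> (l - (0 + \<alpha> * x))) \<partial>lborel)"
    by (simp add: normal_density_def power2_commute)
  also have "\<dots> = (\<integral>\<^sup>+y. normal_density 0 (\<bar>\<alpha>\<bar> * \<sigma>) y * ennreal (normal_density 0 \<gamma> (l - y))
      \<partial>lborel)"
    using nn_integral_normal_density_affine[OF False assms(1),
        where f="\<lambda>y. ennreal (normal_density 0 \<gamma> (l - y))" and b=0 and \<mu>=0]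
    by simp
  also have "\<dots> = normal_density 0 (sqrt (\<gamma>\<^sup>2 + (\<bar>\<alpha>\<bar> * \<sigma>)\<^sup>2)) l"
    using fun_cong[OF conv_normal_density_zero_mean[OF assms(2), of "\<bar>\<alpha>\<bar> * \<sigma>"], of l] False assms
    by (simp add: ennreal_mult'[symmetric] mult.commute)
  finally show ?thesis by (simp add: power_mult_distrib)
qed

definition normal_tail :: "real \<Rightarrow> real" where
  "normal_tail t = measure (normal_measure 0 1) {t<..}"

lemma measure_normal_measure_singleton: "measure (normal_measure \<mu> \<sigma>) {c} = 0"
  by (simp add: measure_def emeasure_normal_measure nn_integral_indicator_singleton)

lemma measure_normal_measure_lessThan:
  assumes "0 < \<sigma>"
  shows "measure (normal_measure \<mu> \<sigma>) {..<c} = 1 - measure (normal_measure \<mu> \<sigma>) {c<..}"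
proof -
  interpret prob_space "normal_measure \<mu> \<sigma>"
    using assms by (rule prob_space_normal_measure)
  have "measure (normal_measure \<mu> \<sigma>) {..<c} = prob ({..<c} \<union> {c})"
    by (subst finite_measure_Union) (auto simp: measure_normal_measure_singleton)
  also have "{..<c} \<union> {c} = space (normal_measure \<mu> \<sigma>) - {c<..}"
    by auto
  finally show ?thesis
    using prob_compl[of "{c<..}"] by simp
qed

lemma measure_normal_measure_greaterThan:
  assumes "0 < \<sigma>"
  shows "measure (normal_measure 0 \<sigma>) {c<..} = normal_tail (c / \<sigma>)"
proof -
  have "normal_measure 0 \<sigma> = distr (normal_measure 0 1) lborel (\<lambda>y. 0 + \<sigma> * y)"
    using normal_measure_affine[of \<sigma> 1 0 0] assms by simp
  also have "measure \<dots> {c<..} = measure (normal_measure 0 1) {x. c < \<sigma> * x}"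
    by (subst measure_distr) (simp_all add: vimage_def)
  also have "{x. c < \<sigma> * x} = {c / \<sigma><..}"
    using assms by (auto simp: pos_divide_less_eq mult.commute)
  finally show ?thesis
    by (simp add: normal_tail_def)
qed

lemma normal_tail_0: "normal_tail 0 = 1/2"
proof -
  have reflect: "distr (normal_measure 0 1) lborel (\<lambda>y. 0 + -1 * y) = normal_measure 0 1"
    using normal_measure_affine[of "-1" 1 0 0] by simp
  have "measure (normal_measure 0 1) {..<0}
      = measure (distr (normal_measure 0 1) lborel (\<lambda>y. 0 + -1 * y)) {..<0}"
    by (simp only: reflect)
  also have "\<dots> = normal_tail 0"
    by (subst measure_distr) (simp_all add: vimage_def normal_tail_def greaterThan_def)
  finally show ?thesis
    using measure_normal_measure_lessThan[of 1 0 0] by (simp add: normal_tail_def)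
qed

lemma normal_tail_nonneg: "0 \<le> normal_tail t"
  by (simp add: normal_tail_def)

lemma normal_tail_antimono: "s \<le> t \<Longrightarrow> normal_tail t \<le> normal_tail s"
proof -
  interpret prob_space "normal_measure 0 1"
    by (simp add: prob_space_normal_measure)
  show "s \<le> t \<Longrightarrow> normal_tail t \<le> normal_tail s"
    unfolding normal_tail_def by (intro finite_measure_mono) auto
qed

lemma ennreal_normal_tail:
  "ennreal (normal_tail t) = (\<integral>\<^sup>+z\<in>{t<..}. std_normal_density z \<partial>lborel)"
proof -
  interpret prob_space "normal_measure 0 1"
    by (simp add: prob_space_normal_measure)
  show ?thesis
    unfolding normal_tail_def by (simp add: emeasure_eq_measure[symmetric] emeasure_normal_measure)
qed

lemma std_normal_density_shift_le:
  assumes "0 \<le> t" "0 \<le> y"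
  shows "std_normal_density (t + y) \<le> exp (- t\<^sup>2 / 2) * std_normal_density y"
proof -
  have "- (t + y)\<^sup>2 / 2 \<le> - t\<^sup>2 / 2 + - y\<^sup>2 / 2"
    using assms by (simp add: power2_eq_square field_simps)
  then have "exp (- (t + y)\<^sup>2 / 2) \<le> exp (- t\<^sup>2 / 2) * exp (- y\<^sup>2 / 2)"
    by (simp add: exp_add[symmetric])
  then show ?thesis
    by (simp add: std_normal_density_def divide_right_mono)
qed

lemma normal_tail_le_exp:
  assumes "0 \<le> t"
  shows "normal_tail t \<le> exp (- t\<^sup>2 / 2) / 2"
proof -
  have "ennreal (normal_tail t) = (\<integral>\<^sup>+y\<in>{0<..}. std_normal_density (t + y) \<partial>lborel)"
    unfolding ennreal_normal_tail
    by (subst nn_integral_real_affine[where c=1 and t=t])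
       (auto intro!: nn_integral_cong simp: indicator_def)
  also have "\<dots> \<le> (\<integral>\<^sup>+y\<in>{0<..}. exp (- t\<^sup>2 / 2) * std_normal_density y \<partial>lborel)"
    using std_normal_density_shift_le[OF assms]
    by (intro nn_integral_mono) (auto simp: indicator_def intro: ennreal_leI)
  also have "\<dots> = exp (- t\<^sup>2 / 2) * ennreal (normal_tail 0)"
    by (simp add: ennreal_normal_tail nn_integral_cmult ennreal_mult mult.assoc)
  also have "\<dots> = ennreal (exp (- t\<^sup>2 / 2) * normal_tail 0)"
    by (rule ennreal_mult'[symmetric]) simp
  finally show ?thesis
    by (simp add: ennreal_le_iff normal_tail_0)
qed

lemma normal_tail_lt_half:
  assumes "0 < t"
  shows "normal_tail t < 1/2"
proof -
  have "exp (- t\<^sup>2 / 2) < 1"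
    using assms by simp
  then show ?thesis
    using normal_tail_le_exp[of t] assms by linarith
qed

lemma has_integral_std_normal_minorant:
  assumes "0 \<le> t"
  shows "((\<lambda>z. (1 - z\<^sup>2 / 2) / sqrt (2 * pi)) has_integral (t - t^3 / 6) / sqrt (2 * pi)) {0..t}"
proof -
  have "((\<lambda>z. (z - z^3 / 6) / sqrt (2 * pi)) has_real_derivative (1 - x\<^sup>2 / 2) / sqrt (2 * pi))
      (at x within {0..t})" for x
    by (intro DERIV_cdivide) (auto intro!: derivative_eq_intros simp: power2_eq_square)
  then show ?thesis
    using fundamental_theorem_of_calculus[OF assms, of "\<lambda>z. (z - z^3 / 6) / sqrt (2 * pi)"]
    by (simp add: has_real_derivative_iff_has_vector_derivative)
qed

lemma normal_tail_le_cubic: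
  assumes "0 \<le> t" "t\<^sup>2 \<le> 2"
  shows "normal_tail t \<le> 1/2 - (t - t^3 / 6) / sqrt (2 * pi)"
proof -
  interpret prob_space "normal_measure 0 1"
    by (simp add: prob_space_normal_measure)
  have "{0<..} - {0<..t} = {t<..}"
    using assms(1) by auto
  then have "normal_tail t = prob ({0<..} - {0<..t})"
    by (simp add: normal_tail_def)
  also have "\<dots> = 1/2 - prob {0<..t}"
    using normal_tail_0 by (subst finite_measure_Diff) (auto simp: normal_tail_def)
  finally have tail: "normal_tail t = 1/2 - prob {0<..t}" .
  have "ennreal ((t - t^3 / 6) / sqrt (2 * pi))
      = (\<integral>\<^sup>+z\<in>{0..t}. (1 - z\<^sup>2 / 2) / sqrt (2 * pi) \<partial>lborel)"
  proof (rule nn_integral_has_integral_lebesgue'[symmetric])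
    fix z :: real assume "z \<in> {0..t}"
    then have "z\<^sup>2 \<le> t\<^sup>2" by (auto intro!: power_mono)
    then show "0 \<le> (1 - z\<^sup>2 / 2) / sqrt (2 * pi)" using assms by simp
  qed (rule has_integral_std_normal_minorant[OF assms(1)])
  also have "\<dots> \<le> (\<integral>\<^sup>+z\<in>{0<..t}. std_normal_density z \<partial>lborel)"
  proof (rule nn_integral_mono_AE)
    show "AE z in lborel. ennreal ((1 - z\<^sup>2 / 2) / sqrt (2 * pi)) * indicator {0..t} z
        \<le> ennreal (std_normal_density z) * indicator {0<..t} z"
      using AE_lborel_singleton[of 0]
    proof eventually_elim
      case (elim z)
      have "1 - z\<^sup>2 / 2 \<le> exp (- z\<^sup>2 / 2)"
        using exp_ge_add_one_self[of "- z\<^sup>2 / 2"] by simp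
      then have "(1 - z\<^sup>2 / 2) / sqrt (2 * pi) \<le> std_normal_density z"
        by (simp add: std_normal_density_def divide_right_mono)
      then show ?case using elim by (auto simp: indicator_def intro: ennreal_leI)
    qed
  qed
  also have "\<dots> = ennreal (prob {0<..t})"
    by (simp add: emeasure_eq_measure[symmetric] emeasure_normal_measure)
  finally show ?thesis
    unfolding tail by (simp add: ennreal_le_iff)
qed

section \<open>Linear forms of the bivariate normal vector\<close>

lemma bvn_density_factor:
  assumes sx: "0 < sx" and sy: "0 < sy" and r: "-1 < r" "r < 1"
  shows "bvn_density sx sy r (x, y)
       = normal_density 0 sx x * normal_density (r * sy / sx * x) (sy * sqrt (1 - r\<^sup>2)) y"
proof -
  have r2: "0 < 1 - r\<^sup>2" using r by (simp add: abs_square_less_1)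
  have exponent: "- (x\<^sup>2 / sx\<^sup>2 - 2 * r * x * y / (sx * sy) + y\<^sup>2 / sy\<^sup>2) / (2 * (1 - r\<^sup>2))
     = - (x - 0)\<^sup>2 / (2 * sx\<^sup>2) + - (y - r * sy / sx * x)\<^sup>2 / (2 * (sy * sqrt (1 - r\<^sup>2))\<^sup>2)"
    using sx sy r2 by (simp add: field_simps power2_eq_square)
  have "sqrt (2 * pi * sx\<^sup>2) * sqrt (2 * pi * (sy * sqrt (1 - r\<^sup>2))\<^sup>2)
      = (sqrt (2 * pi) * sqrt (2 * pi)) * (sx * sy * sqrt (1 - r\<^sup>2))"
    using sx sy r2 by (simp add: real_sqrt_mult ac_simps)
  then have normaliser: "sqrt (2 * pi * sx\<^sup>2) * sqrt (2 * pi * (sy * sqrt (1 - r\<^sup>2))\<^sup>2)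
      = 2 * pi * sx * sy * sqrt (1 - r\<^sup>2)"
    by simp
  show ?thesis
    unfolding bvn_density_def Let_def fst_conv snd_conv exponent
    unfolding exp_add normal_density_def normaliser[symmetric] by simp
qed

lemma bvn_density_measurable [measurable]: "bvn_density sx sy r \<in> borel_measurable borel"
  unfolding borel_prod[symmetric] bvn_density_def Let_def by measurable

lemma emeasure_bvn_measure_iterated:
  assumes sx: "0 < sx" and sy: "0 < sy" and r: "-1 < r" "r < 1"
    and [measurable]: "B \<in> sets borel"
  shows "emeasure (bvn_measure sx sy r) B = (\<integral>\<^sup>+x. normal_density 0 sx x *
            (\<integral>\<^sup>+y. normal_density (r * sy / sx * x) (sy * sqrt (1 - r\<^sup>2)) y
               * (indicator B (x, y) :: ennreal) \<partial>lborel) \<partial>lborel)"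
    (is "_ = ?iterated")
proof -
  have "emeasure (bvn_measure sx sy r) B = (\<integral>\<^sup>+p\<in>B. bvn_density sx sy r p \<partial>(lborel \<Otimes>\<^sub>M lborel))"
    by (simp add: bvn_measure_def emeasure_density lborel_prod)
  also have "\<dots> = (\<integral>\<^sup>+x. \<integral>\<^sup>+y. bvn_density sx sy r (x, y) * (indicator B (x, y) :: ennreal)
      \<partial>lborel \<partial>lborel)"
    by (rule lborel.nn_integral_fst[symmetric]) (simp add: lborel_prod)
  also have "\<dots> = ?iterated"
    by (subst nn_integral_cmult[symmetric])
       (auto intro!: nn_integral_cong simp: bvn_density_factor[OF sx sy r] ennreal_mult' mult.assoc)
  finally show ?thesis .
qed

definition bvn_variance :: "real \<Rightarrow> real \<Rightarrow> real \<Rightarrow> real \<Rightarrow> real \<Rightarrow> real" where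
  "bvn_variance sx sy r w1 w2 = w1\<^sup>2 * sx\<^sup>2 + 2 * r * w1 * w2 * sx * sy + w2\<^sup>2 * sy\<^sup>2"

lemma bvn_variance_pos:
  assumes "0 < sx" "0 < sy" "-1 < r" "r < 1" "(w1, w2) \<noteq> (0, 0)"
  shows "0 < bvn_variance sx sy r w1 w2"
proof (cases "w2 = 0")
  case True
  then show ?thesis using assms by (simp add: bvn_variance_def)
next
  case False
  have "0 < 1 - r\<^sup>2"
    using assms(3,4) by (simp add: abs_square_less_1)
  then have "0 < (1 - r\<^sup>2) * (w2 * sy)\<^sup>2"
    using False assms(2) by simp
  moreover have "bvn_variance sx sy r w1 w2 = (w1 * sx + r * w2 * sy)\<^sup>2 + (1 - r\<^sup>2) * (w2 * sy)\<^sup>2"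
    by (simp add: bvn_variance_def power2_eq_square algebra_simps)
  ultimately show ?thesis
    by (simp add: add_nonneg_pos)
qed

lemma bvn_variance_le:
  assumes "0 \<le> sx" "0 \<le> sy" "0 \<le> r" "\<bar>w1\<bar> \<le> M" "\<bar>w2\<bar> \<le> M"
  shows "bvn_variance sx sy r w1 w2 \<le> (sx\<^sup>2 + 2 * r * sx * sy + sy\<^sup>2) * M\<^sup>2"
proof -
  have "w1\<^sup>2 \<le> M\<^sup>2" "w2\<^sup>2 \<le> M\<^sup>2"
    using power_mono[OF assms(4) abs_ge_zero, of 2] power_mono[OF assms(5) abs_ge_zero, of 2]
    by simp_all
  moreover have "w1 * w2 \<le> M\<^sup>2"
    using assms(4,5) abs_ge_self[of "w1 * w2"] mult_mono[of "\<bar>w1\<bar>" M "\<bar>w2\<bar>" M]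
    by (simp add: abs_mult power2_eq_square)
  moreover have "0 \<le> 2 * r * sx * sy"
    using assms(1-3) by simp
  ultimately have "sx\<^sup>2 * w1\<^sup>2 + (2 * r * sx * sy) * (w1 * w2) + sy\<^sup>2 * w2\<^sup>2
      \<le> sx\<^sup>2 * M\<^sup>2 + (2 * r * sx * sy) * M\<^sup>2 + sy\<^sup>2 * M\<^sup>2"
    by (intro add_mono mult_left_mono) auto
  then show ?thesis
    by (simp add: bvn_variance_def algebra_simps)
qed

lemma borel_measurable_linear_form [measurable]:
  "(\<lambda>p::real \<times> real. w1 * fst p + w2 * snd p) \<in> borel_measurable borel"
  by (intro borel_measurable_continuous_onI continuous_intros)

lemma emeasure_gaussian_linear_model:
  assumes sx: "0 < sx" and \<tau>: "0 < \<tau>" and w: "w1 + w2 * m \<noteq> 0 \<or> w2 \<noteq> 0"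
    and [measurable]: "A \<in> sets borel"
  shows "(\<integral>\<^sup>+x. normal_density 0 sx x *
            (\<integral>\<^sup>+y. normal_density (m * x) \<tau> y * (indicator A (w1 * x + w2 * y) :: ennreal)
             \<partial>lborel) \<partial>lborel)
       = emeasure (normal_measure 0 (sqrt ((w2 * \<tau>)\<^sup>2 + ((w1 + w2 * m) * sx)\<^sup>2))) A"
    (is "(\<integral>\<^sup>+x. _ * ?fibre x \<partial>lborel) = _")
proof (cases "w2 = 0")
  case True
  then have w1: "w1 \<noteq> 0" using w by simp
  have "(\<integral>\<^sup>+x. normal_density 0 sx x * ?fibre x \<partial>lborel)
      = (\<integral>\<^sup>+x. normal_density 0 sx x * (indicator A (0 + w1 * x) :: ennreal) \<partial>lborel)"
    using True by (simp add: nn_integral_multc nn_integral_normal_density_eq_1[OF \<tau>])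
  also have "\<dots> = (\<integral>\<^sup>+l\<in>A. normal_density 0 (\<bar>w1\<bar> * sx) l \<partial>lborel)"
    using nn_integral_normal_density_affine[OF w1 sx, where f="indicator A" and b=0 and \<mu>=0]
    by simp
  finally show ?thesis
    using True sx by (simp add: emeasure_normal_measure abs_mult)
next
  case False
  define \<alpha> \<gamma> where "\<alpha> = w1 + w2 * m" and "\<gamma> = \<bar>w2\<bar> * \<tau>"
  have \<gamma>: "0 < \<gamma>"
    using False \<tau> by (simp add: \<gamma>_def)
  have "?fibre x = (\<integral>\<^sup>+l. normal_density (\<alpha> * x) \<gamma> l * (indicator A l :: ennreal) \<partial>lborel)" for x
    using nn_integral_normal_density_affine[OF False \<tau>,
        where f="indicator A" and b="w1 * x" and \<mu>="m * x"]
    by (simp add: \<alpha>_def \<gamma>_def algebra_simps)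
  then have "(\<integral>\<^sup>+x. normal_density 0 sx x * ?fibre x \<partial>lborel)
      = (\<integral>\<^sup>+x. \<integral>\<^sup>+l. normal_density 0 sx x * ennreal (normal_density (\<alpha> * x) \<gamma> l)
           * indicator A l \<partial>lborel \<partial>lborel)"
    by (simp add: nn_integral_cmult[symmetric] mult.assoc)
  also have "\<dots> = (\<integral>\<^sup>+l. \<integral>\<^sup>+x. normal_density 0 sx x * ennreal (normal_density (\<alpha> * x) \<gamma> l)
           * indicator A l \<partial>lborel \<partial>lborel)"
    by (rule lborel_pair.Fubini') (unfold normal_density_def, measurable)
  also have "\<dots> = (\<integral>\<^sup>+l\<in>A. normal_density 0 (sqrt (\<gamma>\<^sup>2 + (\<alpha> * sx)\<^sup>2)) l \<partial>lborel)"
    by (intro nn_integral_cong) (simp add: indicator_def nn_integral_normal_mixture[OF sx \<gamma>])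
  finally show ?thesis
    by (simp add: emeasure_normal_measure \<alpha>_def \<gamma>_def power_mult_distrib)
qed

lemma distr_bvn_linear:
  assumes sx: "0 < sx" and sy: "0 < sy" and r: "-1 < r" "r < 1" and w: "(w1, w2) \<noteq> (0, 0)"
  shows "distr (bvn_measure sx sy r) lborel (\<lambda>p. w1 * fst p + w2 * snd p)
       = normal_measure 0 (sqrt (bvn_variance sx sy r w1 w2))"
proof (rule measure_eqI)
  fix A assume "A \<in> sets (distr (bvn_measure sx sy r) lborel (\<lambda>p. w1 * fst p + w2 * snd p))"
  then have [measurable]: "A \<in> sets borel" by simp
  define m \<tau> where "m = r * sy / sx" and "\<tau> = sy * sqrt (1 - r\<^sup>2)"
  have r2: "0 < 1 - r\<^sup>2"
    using r by (simp add: abs_square_less_1)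
  have \<tau>: "0 < \<tau>"
    using sy r2 by (simp add: \<tau>_def)
  have "(w2 * \<tau>)\<^sup>2 + ((w1 + w2 * m) * sx)\<^sup>2 = w2\<^sup>2 * sy\<^sup>2 * (1 - r\<^sup>2) + (w1 * sx + w2 * r * sy)\<^sup>2"
    using sx r2 by (simp add: m_def \<tau>_def power_mult_distrib algebra_simps)
  also have "\<dots> = bvn_variance sx sy r w1 w2"
    by (simp add: bvn_variance_def power2_eq_square algebra_simps)
  finally have variance: "(w2 * \<tau>)\<^sup>2 + ((w1 + w2 * m) * sx)\<^sup>2 = bvn_variance sx sy r w1 w2" .
  have "w1 + w2 * m \<noteq> 0 \<or> w2 \<noteq> 0"
    using w by auto
  note gaussian_model = emeasure_gaussian_linear_model[OF sx \<tau> this, where A=A, unfolded variance]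
  have preimage: "{p::real \<times> real. w1 * fst p + w2 * snd p \<in> A} \<in> sets borel"
    using measurable_sets_borel[OF borel_measurable_linear_form] by (auto simp: vimage_def)
  have "emeasure (distr (bvn_measure sx sy r) lborel (\<lambda>p. w1 * fst p + w2 * snd p)) A
      = emeasure (bvn_measure sx sy r) {p. w1 * fst p + w2 * snd p \<in> A}"
    by (subst emeasure_distr) (auto simp: vimage_def bvn_measure_def)
  also have "\<dots> = emeasure (normal_measure 0 (sqrt (bvn_variance sx sy r w1 w2))) A"
    by (subst emeasure_bvn_measure_iterated[OF sx sy r preimage])
       (simp add: gaussian_model[symmetric] m_def \<tau>_def indicator_def mult.commute)
  finally show "emeasure (distr (bvn_measure sx sy r) lborel (\<lambda>p. w1 * fst p + w2 * snd p)) A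
      = emeasure (normal_measure 0 (sqrt (bvn_variance sx sy r w1 w2))) A" .
qed simp

lemma bvn_prob_linear:
  assumes "0 < sx" "0 < sy" "-1 < r" "r < 1" "(w1, w2) \<noteq> (0, 0)" "A \<in> sets borel"
  shows "bvn_prob sx sy r {p. w1 * fst p + w2 * snd p \<in> A}
       = measure (normal_measure 0 (sqrt (bvn_variance sx sy r w1 w2))) A"
  using assms
  by (simp add: distr_bvn_linear[symmetric] measure_distr bvn_prob_def bvn_measure_def vimage_def)

lemma C1_eq_halfplane:
  "C1 a b = {p. (fst a - fst b) * fst p + (snd a - snd b) * snd p
              \<in> {((fst a)\<^sup>2 + (snd a)\<^sup>2 - (fst b)\<^sup>2 - (snd b)\<^sup>2) / 2 <..}}"
  by (auto simp: C1_def power2_eq_square field_simps)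

lemma C2_eq_halfplane:
  "C2 a b = {p. (fst a - fst b) * fst p + (snd a - snd b) * snd p
              \<in> {..< ((fst a)\<^sup>2 + (snd a)\<^sup>2 - (fst b)\<^sup>2 - (snd b)\<^sup>2) / 2}}"
  by (auto simp: C2_def power2_eq_square field_simps)

lemma payoffK_eq_normal_tail:
  fixes a b :: "real \<times> real"
  assumes "0 < sx" "0 < sy" "-1 < r" "r < 1" "a \<noteq> b"
  defines "\<sigma> \<equiv> sqrt (bvn_variance sx sy r (fst a - fst b) (snd a - snd b))"
    and "c \<equiv> ((fst a)\<^sup>2 + (snd a)\<^sup>2 - (fst b)\<^sup>2 - (snd b)\<^sup>2) / 2"
  shows "payoffK sx sy r a b
       = (fst a + snd a) * normal_tail (c / \<sigma>) + (fst b + snd b) * (1 - normal_tail (c / \<sigma>))"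
proof -
  have w: "(fst a - fst b, snd a - snd b) \<noteq> (0, 0)"
    using assms(5) by (auto simp: prod_eq_iff)
  have \<sigma>: "0 < \<sigma>"
    using bvn_variance_pos[OF assms(1-4) w] by (simp add: \<sigma>_def)
  have "bvn_prob sx sy r (C1 a b) = measure (normal_measure 0 \<sigma>) {c<..}"
    unfolding C1_eq_halfplane \<sigma>_def c_def by (rule bvn_prob_linear[OF assms(1-4) w]) simp
  then have "bvn_prob sx sy r (C1 a b) = normal_tail (c / \<sigma>)"
    by (simp add: measure_normal_measure_greaterThan[OF \<sigma>])
  moreover have "bvn_prob sx sy r (C2 a b) = measure (normal_measure 0 \<sigma>) {..<c}"
    unfolding C2_eq_halfplane \<sigma>_def c_def by (rule bvn_prob_linear[OF assms(1-4) w]) simp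
  then have "bvn_prob sx sy r (C2 a b) = 1 - normal_tail (c / \<sigma>)"
    by (simp add: measure_normal_measure_lessThan[OF \<sigma>] measure_normal_measure_greaterThan[OF \<sigma>])
  ultimately show ?thesis
    using assms(5) by (simp add: payoffK_def)
qed

section \<open>Points beyond the line \<open>x + y = -2 x2\<^sup>*\<close>\<close>

lemma far_side_margin:
  fixes X x1 y1 :: real
  assumes X: "0 < X" and far: "x1 + y1 < - 2 * X"
  defines "u \<equiv> - (x1 + y1)"
  defines "E \<equiv> sqrt (u\<^sup>2 / 2 + u * X) - u / 2 - X"
    and "M \<equiv> u / 2 + X + \<bar>x1 - y1\<bar> / 2"
  shows "0 < E" and "2 * E * M \<le> (x1\<^sup>2 + y1\<^sup>2 - 2 * X\<^sup>2) / 2"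
    and "\<bar>x1 - X\<bar> \<le> M" and "\<bar>y1 - X\<bar> \<le> M"
    and "u\<^sup>2 = 4 * E * u + 4 * (E + X)\<^sup>2"
proof -
  define R h q where "R = sqrt (u\<^sup>2 / 2 + u * X)" and "h = u / 2 + X" and "q = (x1 - y1) / 2"
  have u: "2 * X < u"
    using far by (simp add: u_def)
  have R: "0 \<le> R" "R\<^sup>2 = u\<^sup>2 / 2 + u * X"
    using u X by (simp_all add: R_def)
  have E: "E = R - h"
    by (simp add: E_def R_def h_def)
  have key: "E\<^sup>2 + 2 * E * h = u\<^sup>2 / 4 - X\<^sup>2"
    using R(2) by (simp add: E h_def power2_eq_square algebra_simps)
  have "(2 * X)\<^sup>2 < u\<^sup>2"
    using u X by (intro power_strict_mono) auto
  then have "h\<^sup>2 < R\<^sup>2"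
    using R(2) by (simp add: h_def power2_eq_square algebra_simps)
  then show "0 < E"
    using R(1) E power2_less_imp_less by fastforce
  show "u\<^sup>2 = 4 * E * u + 4 * (E + X)\<^sup>2"
    using key by (simp add: h_def power2_eq_square algebra_simps)
  have x1: "x1 = - u / 2 + q" and y1: "y1 = - u / 2 - q"
    by (simp_all add: q_def u_def field_simps)
  have M: "M = h + \<bar>q\<bar>"
    by (simp add: M_def h_def q_def)
  \<comment> \<open>\<open>E\<close> is the minimum of \<open>(x1\<^sup>2 + y1\<^sup>2 - 2 X\<^sup>2) / (4 M)\<close> along the line \<open>x1 + y1 = - u\<close>, attained at \<open>\<bar>q\<bar> = E\<close>.\<close>
  have "(x1\<^sup>2 + y1\<^sup>2 - 2 * X\<^sup>2) / 2 - 2 * E * M = (\<bar>q\<bar> - E)\<^sup>2"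
    unfolding M x1 y1 using key by (simp add: power2_eq_square algebra_simps)
  then show "2 * E * M \<le> (x1\<^sup>2 + y1\<^sup>2 - 2 * X\<^sup>2) / 2"
    by (metis diff_ge_0_iff_ge zero_le_power2)
  show "\<bar>x1 - X\<bar> \<le> M" "\<bar>y1 - X\<bar> \<le> M"
    unfolding M x1 y1 h_def using u X by (auto simp: abs_if)
qed

text \<open>Up to \<open>normal_tail_margin_bound\<close>, \<open>e\<close> and \<open>U\<close> are the margin \<open>E\<close> and the offset \<open>u\<close> of
  \<open>far_side_margin\<close> in units of \<open>x2\<^sup>*\<close>; hypothesis \<open>quad\<close> is its last conclusion.\<close>

lemma margin_offset_le:
  fixes e U :: real
  assumes e: "0 < e" and U: "0 < U" and quad: "U\<^sup>2 = 4 * e * U + 4 * (e + 1)\<^sup>2"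
  shows "U * (1 + e) \<le> (2 + 4 * e) * (1 + e) + e\<^sup>2"
proof (rule ccontr)
  define k B where "k = 1 + e" and "B = (2 + 4 * e) * (1 + e) + e\<^sup>2"
  assume "\<not> U * (1 + e) \<le> (2 + 4 * e) * (1 + e) + e\<^sup>2"
  then have "0 < U * k - B"
    by (simp add: k_def B_def)
  moreover have "0 < U * k + B - 4 * e * k"
    using e U by (simp add: k_def B_def algebra_simps power2_eq_square add_pos_pos)
  ultimately have "0 < (U * k - B) * (U * k + B - 4 * e * k)"
    by (rule mult_pos_pos)
  moreover have "(U * k - B) * (U * k + B - 4 * e * k) = - (e ^ 4)"
    using quad unfolding k_def B_def by algebra
  moreover have "0 \<le> e ^ 4"
    using e by simp
  ultimately show False
    by linarith
qed

lemma cubic_tail_coefficient_bound: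
  fixes e :: real
  assumes e: "0 < e" "e \<le> 11/10"
  shows "(1/2 - e/2 + pi * e^3 / 24) * (4 * (1 + e)\<^sup>2 + e\<^sup>2) < 2 * (1 + e)"
proof -
  have "e\<^sup>2 \<le> (11/10)\<^sup>2"
    using e by (intro power_mono) auto
  then have "4 + 8 * e + 5 * e\<^sup>2 \<le> 1885/100"
    using e by (simp add: power2_eq_square)
  moreover have "pi \<le> 3.1416"
    using pi_approx(2) by simp
  ultimately have "pi / 24 * (4 + 8 * e + 5 * e\<^sup>2) \<le> 3.1416 / 24 * (1885/100)"
    using e by (intro mult_mono) auto
  then have "e * (pi / 24 * (4 + 8 * e + 5 * e\<^sup>2)) \<le> e * (3.1416 / 24 * (1885/100))"
    using e by (intro mult_left_mono) auto
  also have "\<dots> < 3/2 + 5/2 * e"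
    using e by simp
  finally have "e\<^sup>2 * (e * (pi / 24 * (4 + 8 * e + 5 * e\<^sup>2))) < e\<^sup>2 * (3/2 + 5/2 * e)"
    using e by (intro mult_strict_left_mono) auto
  moreover have "(1/2 - e/2 + pi * e^3 / 24) * (4 * (1 + e)\<^sup>2 + e\<^sup>2)
      = 2 * (1 + e) - e\<^sup>2 * (3/2 + 5/2 * e) + e\<^sup>2 * (e * (pi / 24 * (4 + 8 * e + 5 * e\<^sup>2)))"
    by (simp add: power2_eq_square power3_eq_cube algebra_simps)
  ultimately show ?thesis
    by linarith
qed

lemma cubic_tail_bound_small_margin:
  fixes e U :: real
  assumes e: "0 < e" "e \<le> 11/10" and U: "0 < U" and quad: "U\<^sup>2 = 4 * e * U + 4 * (e + 1)\<^sup>2"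
  shows "(1/2 - e/2 + pi * e^3 / 24) * (2 + U) < 2"
proof -
  define P where "P = 1/2 - e/2 + pi * e^3 / 24"
  have U_bound: "(2 + U) * (1 + e) \<le> 4 * (1 + e)\<^sup>2 + e\<^sup>2"
    using margin_offset_le[OF e(1) U quad] by (simp add: power2_eq_square algebra_simps)
  have "P * ((2 + U) * (1 + e)) < 2 * (1 + e)"
  proof (cases "P \<le> 0")
    case True
    then have "P * ((2 + U) * (1 + e)) \<le> 0"
      using U e by (intro mult_nonpos_nonneg) auto
    also have "0 < 2 * (1 + e)"
      using e by simp
    finally show ?thesis .
  next
    case False
    then have "P * ((2 + U) * (1 + e)) \<le> P * (4 * (1 + e)\<^sup>2 + e\<^sup>2)"
      using U_bound by (intro mult_left_mono) auto
    also have "\<dots> < 2 * (1 + e)"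
      unfolding P_def by (rule cubic_tail_coefficient_bound[OF e])
    finally show ?thesis .
  qed
  then have "P * (2 + U) * (1 + e) < 2 * (1 + e)"
    by (simp only: mult.assoc)
  then have "P * (2 + U) < 2"
    by (rule mult_right_less_imp_less) (use e in simp)
  then show ?thesis
    by (simp add: P_def)
qed

lemma exp_tail_bound_large_margin:
  fixes e U :: real
  assumes e: "11/10 \<le> e" and U: "0 < U" and quad: "U\<^sup>2 = 4 * e * U + 4 * (e + 1)\<^sup>2"
  shows "exp (- (pi * e\<^sup>2 / 4)) / 2 * (2 + U) < 2"
proof -
  have "U \<le> 5 * e + 2"
  proof (rule ccontr)
    assume "\<not> U \<le> 5 * e + 2"
    then have "0 < (U - (5 * e + 2)) * (U + e + 2)"
      using e by (intro mult_pos_pos) auto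
    moreover have "(U - (5 * e + 2)) * (U + e + 2) = - (e\<^sup>2 + 4 * e)"
      using quad by (simp add: power2_eq_square algebra_simps)
    moreover have "0 \<le> e\<^sup>2 + 4 * e"
      using e by simp
    ultimately show False
      by linarith
  qed
  define y where "y = pi * e\<^sup>2 / 4"
  have "3.14 \<le> pi"
    using pi_approx(1) by simp
  then have "3.14 * e\<^sup>2 \<le> pi * e\<^sup>2"
    by (rule mult_right_mono) simp
  then have "314/400 * e\<^sup>2 \<le> y"
    by (simp add: y_def)
  moreover have "11/10 * e \<le> e\<^sup>2"
    using e by (simp add: power2_eq_square mult_right_mono)
  ultimately have y_lin: "8635/10000 * e \<le> y"
    by linarith
  then have "(8635/10000 * e)\<^sup>2 \<le> y\<^sup>2"
    using e by (intro power_mono) auto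
  moreover have "(8635/10000 * e)\<^sup>2 = 74563225/100000000 * e\<^sup>2"
    by (simp add: power2_eq_square)
  ultimately have "82/100 * e \<le> y\<^sup>2"
    using \<open>11/10 * e \<le> e\<^sup>2\<close> e by linarith
  then have "(2 + U) / 4 < 1 + y + y\<^sup>2 / 2"
    using \<open>U \<le> 5 * e + 2\<close> y_lin e by simp
  also have "\<dots> \<le> exp y"
    using exp_lower_Taylor_quadratic[of y] by (simp add: y_def)
  finally have "exp (- y) * (2 + U) < 4"
    by (simp add: exp_minus field_simps)
  then show ?thesis
    by (simp add: y_def)
qed

lemma normal_tail_margin_bound:
  fixes e U :: real
  assumes e: "0 < e" and U: "0 < U" and quad: "U\<^sup>2 = 4 * e * U + 4 * (e + 1)\<^sup>2"
  shows "normal_tail (e * sqrt (2 * pi) / 2) * (2 + U) < 2"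
proof -
  define t where "t = e * sqrt (2 * pi) / 2"
  have t: "0 \<le> t" "t\<^sup>2 = pi * e\<^sup>2 / 2"
    using e by (simp_all add: t_def power_mult_distrib power_divide)
  show ?thesis
  proof (cases "e \<le> 11/10")
    case True
    have "e\<^sup>2 \<le> 121/100"
      using True e mult_mono[of e "11/10" e "11/10"] by (simp add: power2_eq_square)
    moreover have "pi \<le> 3.1416"
      using pi_approx(2) by simp
    ultimately have "pi * e\<^sup>2 \<le> 3.1416 * (121/100)"
      by (intro mult_mono) auto
    then have "t\<^sup>2 \<le> 2"
      using t(2) by simp
    then have "normal_tail t \<le> 1/2 - (t - t^3 / 6) / sqrt (2 * pi)"
      by (rule normal_tail_le_cubic[OF t(1)])
    also have "(t - t^3 / 6) / sqrt (2 * pi) = e/2 - pi * e^3 / 24"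
    proof -
      define s where "s = sqrt (2 * pi)"
      have "0 < s" "pi = s * s / 2"
        by (simp_all add: s_def)
      then show ?thesis
        unfolding t_def s_def[symmetric] by (simp add: power3_eq_cube field_simps)
    qed
    finally have "normal_tail t * (2 + U) \<le> (1/2 - e/2 + pi * e^3 / 24) * (2 + U)"
      using U by (intro mult_right_mono) auto
    also have "\<dots> < 2"
      by (rule cubic_tail_bound_small_margin[OF e True U quad])
    finally show ?thesis
      by (simp add: t_def)
  next
    case False
    have "normal_tail t \<le> exp (- (pi * e\<^sup>2 / 4)) / 2"
      using normal_tail_le_exp[OF t(1)] t(2) by simp
    then have "normal_tail t * (2 + U) \<le> exp (- (pi * e\<^sup>2 / 4)) / 2 * (2 + U)"
      using U by (intro mult_right_mono) auto
    also have "\<dots> < 2"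
      using False U quad by (intro exp_tail_bound_large_margin) auto
    finally show ?thesis
      by (simp add: t_def)
  qed
qed

lemma x2star_pos: "0 < sx \<Longrightarrow> 0 < sy \<Longrightarrow> 0 \<le> r \<Longrightarrow> 0 < x2star sx sy r"
  by (simp add: x2star_def add_pos_nonneg)

lemma sqrt_variance_sum_eq_x2star:
  assumes "0 \<le> sx\<^sup>2 + 2 * r * sx * sy + sy\<^sup>2"
  shows "sqrt (sx\<^sup>2 + 2 * r * sx * sy + sy\<^sup>2) = 4 * x2star sx sy r / sqrt (2 * pi)"
  using assms by (simp add: x2star_def real_sqrt_mult)

lemma normal_tail_far_side:
  fixes sx sy r x1 y1 :: real
  defines "X \<equiv> x2star sx sy r"
  assumes sx: "0 < sx" and sy: "0 < sy" and r: "0 \<le> r" "r < 1" and far: "x1 + y1 < - 2 * X"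
  defines "\<sigma> \<equiv> sqrt (bvn_variance sx sy r (x1 - X) (y1 - X))"
    and "c \<equiv> (x1\<^sup>2 + y1\<^sup>2 - 2 * X\<^sup>2) / 2"
  shows "normal_tail (c / \<sigma>) * (2 * X - (x1 + y1)) < 2 * X"
proof -
  define S where "S = sx\<^sup>2 + 2 * r * sx * sy + sy\<^sup>2"
  have S: "0 < S"
    using sx sy r by (simp add: S_def add_pos_nonneg)
  have X: "0 < X"
    unfolding X_def using sx sy r(1) by (rule x2star_pos)
  define u E M where "u = - (x1 + y1)"
    and "E = sqrt (u\<^sup>2 / 2 + u * X) - u / 2 - X"
    and "M = u / 2 + X + \<bar>x1 - y1\<bar> / 2"
  note margin = far_side_margin[OF X far, folded u_def, folded E_def M_def c_def]
  have M: "0 < M"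
    using far X by (simp add: M_def u_def add_pos_nonneg)
  have "(x1 - X, y1 - X) \<noteq> (0, 0)"
    using far X by auto
  then have \<sigma>: "0 < \<sigma>"
    using bvn_variance_pos[OF sx sy _ r(2)] r by (simp add: \<sigma>_def)
  have "\<sigma> \<le> sqrt (S * M\<^sup>2)"
    unfolding \<sigma>_def S_def using sx sy r margin(3,4)
    by (intro real_sqrt_le_mono bvn_variance_le) auto
  then have \<sigma>_le: "\<sigma> \<le> sqrt S * M"
    using M by (simp add: real_sqrt_mult)
  define e U where "e = E / X" and "U = u / X"
  have e: "0 < e" and U: "0 < U"
    using margin(1) far X by (simp_all add: e_def U_def u_def)
  have EU: "E = e * X" "u = U * X"
    using X by (simp_all add: e_def U_def)
  have "X\<^sup>2 * U\<^sup>2 = X\<^sup>2 * (4 * e * U + 4 * (e + 1)\<^sup>2)"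
    using margin(5) unfolding EU by (simp add: power2_eq_square algebra_simps)
  then have quad: "U\<^sup>2 = 4 * e * U + 4 * (e + 1)\<^sup>2"
    using X by simp
  have "sqrt S = 4 * X / sqrt (2 * pi)"
    using S by (simp add: S_def X_def sqrt_variance_sum_eq_x2star)
  then have "e * sqrt (2 * pi) / 2 = 2 * E * M / (sqrt S * M)"
    using X M unfolding EU by simp
  also have "\<dots> \<le> c / \<sigma>"
    using margin(1,2) M S \<sigma> \<sigma>_le by (intro frac_le) (auto intro: order.trans[OF _ margin(2)])
  finally have "normal_tail (c / \<sigma>) * (2 + U) \<le> normal_tail (e * sqrt (2 * pi) / 2) * (2 + U)"
    using U by (intro mult_right_mono normal_tail_antimono) auto
  also have "\<dots> < 2"
    by (rule normal_tail_margin_bound[OF e U quad])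
  finally have "normal_tail (c / \<sigma>) * (2 + U) < 2" .
  moreover have "2 * X - (x1 + y1) = X * (2 + U)"
    using X by (simp add: EU(2)[symmetric] u_def algebra_simps)
  ultimately show ?thesis
    using X by (simp add: mult.left_commute)
qed

lemma payoff_pos_of_tail_lt_half:
  fixes s X q :: real
  assumes "0 < X" "0 \<le> q" "q < 1/2" "- 2 * X \<le> s"
  shows "0 < s * q + 2 * X * (1 - q)"
proof -
  have "- 2 * X * q \<le> s * q"
    using assms(4,2) by (rule mult_right_mono)
  moreover have "0 < 2 * X * (1 - 2 * q)"
    using assms(1,3) by simp
  ultimately show ?thesis
    by (simp add: algebra_simps)
qed

theorem mainTheorem15:
  fixes sx sy r x1 y1 :: real
  assumes "0 < sx" and "sx < sy" and "0 < r" and "r < 1"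
    and "x1^2 + y1^2 > 2 * (x2star sx sy r)^2"
  shows "payoffK sx sy r (x1, y1) (x2star sx sy r, x2star sx sy r) > 0"
proof -
  define X where "X = x2star sx sy r"
  define \<sigma> where "\<sigma> = sqrt (bvn_variance sx sy r (x1 - X) (y1 - X))"
  define c where "c = (x1\<^sup>2 + y1\<^sup>2 - 2 * X\<^sup>2) / 2"
  define q where "q = normal_tail (c / \<sigma>)"
  have sy: "0 < sy" and r: "-1 < r" "0 \<le> r"
    using assms(1-3) by simp_all
  have X: "0 < X"
    unfolding X_def using assms(1) sy r(2) by (rule x2star_pos)
  have c: "0 < c"
    using assms(5) by (simp add: c_def X_def)
  have "(x1, y1) \<noteq> (X, X)"
    using c by (auto simp: c_def)
  then have \<sigma>: "0 < \<sigma>" and K: "payoffK sx sy r (x1, y1) (X, X) = (x1 + y1) * q + 2 * X * (1 - q)"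
    using bvn_variance_pos[OF assms(1) sy r(1) assms(4)]
      payoffK_eq_normal_tail[OF assms(1) sy r(1) assms(4)]
    by (simp_all add: \<sigma>_def c_def q_def power2_eq_square)
  show ?thesis
    unfolding X_def[symmetric] K
  proof (cases "x1 + y1 < - 2 * X")
    case True
    then have "q * (2 * X - (x1 + y1)) < 2 * X"
      using normal_tail_far_side[OF assms(1) sy r(2) assms(4)]
      by (simp add: q_def \<sigma>_def c_def X_def)
    then show "0 < (x1 + y1) * q + 2 * X * (1 - q)"
      by (simp add: algebra_simps)
  next
    case False
    have "0 \<le> q" "q < 1/2"
      using normal_tail_nonneg normal_tail_lt_half c \<sigma> by (simp_all add: q_def)
    with X False show "0 < (x1 + y1) * q + 2 * X * (1 - q)"
      by (intro payoff_pos_of_tail_lt_half) auto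
  qed
qed

end
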